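(* Let $k,m\ge 1$, let $q\in\mathbb{R}^k$ (the source position) and let $p_1,\dots,p_m\in\mathbb{R}^k$ (the sensor positions) with $p_i\neq q$ for all $i$; write $\mathbf{p}=[p_1^\top,\dots,p_m^\top]^\top$, $r_i=\|p_i-q\|$ and $\hat r_i=(p_i-q)/\|p_i-q\|$. For each $i$ let $g_i:(0,\infty)\to\mathbb{R}$ be continuously differentiable and let $h_i(p_i,q)=g_i(\|p_i-q\|)$. Assume: (i) for each $i$, $|g_i'(r)|$ is monotonically decreasing in $r$; (ii) $\sum_{i=1}^m \hat r_i\hat r_i^\top\succ 0$. Let $H(\mathbf{p},q)=(h_1(p_1,q),\dots,h_m(p_m,q))^\top$, let $\nabla_q H(\mathbf{p},q)$ be the $k\times m$ matrix whose $i$-th column is $\nabla_q h_i(p_i,q)$, and suppose the $k\times k$ matrix $\nabla_q H(\mathbf{p},q)\nabla_q H(\mathbf{p},q)^\top$ is invertible, so that $$L(\mathbf{p},q)=\operatorname{Tr}\Big[\big(\nabla_q H(\mathbf{p},q)\,\nabla_q H(\mathbf{p},q)^\top\big)^{-1}\Big]$$ is defined. Then $$\frac{1}{m\,L(\mathbf{p},q)}\le \max_{1\le i\le m}|g_i'(r_i)|^2 .$$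
   Context: Here $\|\cdot\|$ is the Euclidean norm, $\succ 0$ means positive definite, and $\nabla_q h_i$ denotes the gradient of $h_i$ with respect to $q$. The matrix $\nabla_q H\nabla_q H^\top$ plays the role of the (unnormalized) Fisher information matrix of the measurements $y_i=h_i(p_i,q)+\nu_i$ with i.i.d. Gaussian noise. *)

theory Defs
  imports "HOL-Analysis.Analysis"
begin

definition grad :: "(real^'k \<Rightarrow> real) \<Rightarrow> real^'k \<Rightarrow> real^'k" where
  "grad f x = (THE G. (f has_derivative (\<lambda>v. G \<bullet> v)) (at x))"

definition outer :: "real^'k \<Rightarrow> real^'k \<Rightarrow> real^'k^'k" where
  "outer u v = (\<chi> i j. u $ i * v $ j)"

definition pos_def :: "real^'k^'k \<Rightarrow> bool" where
  "pos_def A \<longleftrightarrow> transpose A = A \<and> (\<forall>x. x \<noteq> 0 \<longrightarrow> x \<bullet> (A *v x) > 0)"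

definition gradH :: "('m::finite \<Rightarrow> real \<Rightarrow> real) \<Rightarrow> ('m \<Rightarrow> real^'k) \<Rightarrow> real^'k \<Rightarrow> real^'m^'k" where
  "gradH g p q = (\<chi> j i. grad (\<lambda>x. g i (norm (p i - x))) q $ j)"

definition Lcost :: "('m::finite \<Rightarrow> real \<Rightarrow> real) \<Rightarrow> ('m \<Rightarrow> real^'k) \<Rightarrow> real^'k \<Rightarrow> real" where
  "Lcost g p q = trace (matrix_inv (gradH g p q ** transpose (gradH g p q)))"

end

theory Submission
  imports Defs
begin

text \<open>For the Gram matrix \<open>M = G G\<^sup>T\<close> of the gradients, Cauchy-Schwarz applied to the
  \<open>i\<close>-th row \<open>a\<close> of \<open>G\<close> and to \<open>b = G\<^sup>T M\<^sup>-\<^sup>1 e\<^sub>i\<close> (for which \<open>a \<bullet> b = 1\<close> and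
  \<open>b \<bullet> b = (M\<^sup>-\<^sup>1)\<^sub>i\<^sub>i\<close>) gives \<open>1 \<le> M\<^sub>i\<^sub>i (M\<^sup>-\<^sup>1)\<^sub>i\<^sub>i\<close>. The gradient of \<open>h\<^sub>j\<close> is
  \<open>g\<^sub>j'(r\<^sub>j)\<close> times a unit vector, so \<open>M\<^sub>i\<^sub>i = \<Sum>\<^sub>j (\<partial>\<^sub>i h\<^sub>j)\<^sup>2 \<le> m max\<^sub>j |g\<^sub>j'(r\<^sub>j)|\<^sup>2\<close>.
  Summing over \<open>i\<close> yields \<open>k \<le> m L max\<^sub>j |g\<^sub>j'(r\<^sub>j)|\<^sup>2\<close>, which is stronger than needed.\<close>

lemma grad_eqI:
  fixes f :: "real^'k \<Rightarrow> real"
  assumes "(f has_derivative (\<lambda>v. G \<bullet> v)) (at x)"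
  shows "grad f x = G"
  unfolding grad_def
proof (rule the_equality)
  fix G' assume "(f has_derivative (\<lambda>v. G' \<bullet> v)) (at x)"
  from has_derivative_unique[OF this assms] have "G' \<bullet> (G' - G) = G \<bullet> (G' - G)"
    by metis
  then have "(G' - G) \<bullet> (G' - G) = 0" by (simp add: inner_diff_left)
  then show "G' = G" by simp
qed (fact assms)

lemma has_derivative_radial:
  fixes p q :: "real^'k"
  assumes "p \<noteq> q" and "(g has_real_derivative d) (at (norm (p - q)))"
  shows "((\<lambda>x. g (norm (p - x))) has_derivative
           (\<lambda>v. ((d / norm (p - q)) *\<^sub>R (q - p)) \<bullet> v)) (at q)"
proof -
  have norm_deriv: "(norm has_derivative (\<lambda>v. sgn (p - q) \<bullet> v)) (at (p - q))"
    using has_derivative_norm[of "p - q"] assms(1) by (simp add: inner_commute)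
  have "((\<lambda>x. p - x) has_derivative uminus) (at q)"
    by (auto intro!: derivative_eq_intros)
  from has_derivative_compose[OF this norm_deriv]
  have "((\<lambda>x. norm (p - x)) has_derivative (\<lambda>v. sgn (p - q) \<bullet> - v)) (at q)" .
  moreover have "(g has_derivative (\<lambda>x. d * x)) (at (norm (p - q)))"
    using assms(2) by (simp add: has_field_derivative_def)
  ultimately have "((\<lambda>x. g (norm (p - x))) has_derivative (\<lambda>v. d * (sgn (p - q) \<bullet> - v))) (at q)"
    by (rule has_derivative_compose)
  moreover have "(\<lambda>v. d * (sgn (p - q) \<bullet> - v)) = (\<lambda>v. ((d / norm (p - q)) *\<^sub>R (q - p)) \<bullet> v)"
    by (auto simp: sgn_div_norm inner_commute algebra_simps inner_diff_left divide_inverse)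
  ultimately show ?thesis by simp
qed

lemma abs_gradH_le:
  assumes "p i \<noteq> q" and "(g i has_real_derivative d) (at (norm (p i - q)))"
  shows "\<bar>gradH g p q $ j $ i\<bar> \<le> \<bar>d\<bar>"
proof -
  define r where "r = norm (p i - q)"
  have "r > 0" using assms(1) by (simp add: r_def)
  have "grad (\<lambda>x. g i (norm (p i - x))) q = (d / r) *\<^sub>R (q - p i)"
    using grad_eqI[OF has_derivative_radial[OF assms]] by (simp add: r_def)
  then have "gradH g p q $ j $ i = d / r * (q - p i) $ j"
    by (simp add: gradH_def)
  moreover have "\<bar>(q - p i) $ j\<bar> \<le> r"
    using component_le_norm_cart[of "q - p i" j] by (simp add: r_def norm_minus_commute)
  ultimately show ?thesis
    using \<open>r > 0\<close> by (simp add: abs_mult divide_le_eq) (metis abs_ge_zero mult.commute mult_left_mono)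
qed

lemma matrix_inv_right:
  fixes M :: "'a::semiring_1^'n^'n"
  assumes "invertible M"
  shows "M ** matrix_inv M = mat 1"
  using assms unfolding invertible_def matrix_inv_def by (metis (mono_tags, lifting) someI_ex)

lemma gram_matrix_inv_diag:
  fixes G :: "real^'m^'k"
  assumes "invertible (G ** transpose G)"
  defines "N \<equiv> matrix_inv (G ** transpose G)"
  shows "0 \<le> N $ i $ i" and "1 \<le> (\<Sum>j\<in>UNIV. (G $ i $ j)\<^sup>2) * N $ i $ i"
proof -
  define e :: "real^'k" where "e = axis i 1"
  define a where "a = transpose G *v e"
  define b where "b = transpose G *v (N *v e)"
  have Gb: "G *v b = e"
    unfolding b_def N_def using matrix_inv_right[OF assms(1)]
    by (simp add: matrix_vector_mul_assoc matrix_mul_assoc del: transpose_matrix_vector)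
  have "b \<bullet> b = (N *v e) \<bullet> (G *v b)"
    by (simp add: b_def dot_lmul_matrix[symmetric])
  also have "\<dots> = (N *v e) $ i"
    by (simp add: Gb e_def inner_axis)
  also have "\<dots> = N $ i $ i"
    by (simp add: e_def matrix_vector_mult_def axis_def if_distrib cong: if_cong)
  finally have bb: "b \<bullet> b = N $ i $ i" .
  have "a \<bullet> b = e \<bullet> (G *v b)"
    by (simp add: a_def dot_lmul_matrix[symmetric])
  then have ab: "a \<bullet> b = 1"
    by (simp add: Gb e_def)
  have "a $ j = G $ i $ j" for j
    by (simp add: a_def e_def vector_matrix_mult_def axis_def if_distrib[of "\<lambda>x. x * _"] cong: if_cong)
  then have aa: "a \<bullet> a = (\<Sum>j\<in>UNIV. (G $ i $ j)\<^sup>2)"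
    by (simp add: inner_vec_def power2_eq_square)
  show "0 \<le> N $ i $ i" using bb by (metis inner_ge_zero)
  have "1 = (a \<bullet> b)\<^sup>2" using ab by simp
  also have "\<dots> \<le> (norm a * norm b)\<^sup>2"
    using Cauchy_Schwarz_ineq2[of a b] by (metis abs_ge_zero power2_abs power_mono)
  also have "\<dots> = (a \<bullet> a) * (b \<bullet> b)" by (simp add: power_mult_distrib dot_square_norm)
  finally show "1 \<le> (\<Sum>j\<in>UNIV. (G $ i $ j)\<^sup>2) * N $ i $ i" using aa bb by simp
qed

lemma card_le_trace_gram_inv:
  fixes G :: "real^'m^'k"
  assumes inv: "invertible (G ** transpose G)"
    and row_le: "\<And>i. (\<Sum>j\<in>UNIV. (G $ i $ j)\<^sup>2) \<le> c"
  shows "real CARD('k) \<le> c * trace (matrix_inv (G ** transpose G))"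
proof -
  define N where "N = matrix_inv (G ** transpose G)"
  have diag_le: "1 \<le> c * N $ i $ i" for i
    using gram_matrix_inv_diag[OF inv, of i] row_le[of i] unfolding N_def
    by (meson mult_right_mono order_trans)
  have "(\<Sum>i\<in>(UNIV::'k set). 1) \<le> (\<Sum>i\<in>UNIV. c * N $ i $ i)"
    by (rule sum_mono) (rule diag_le)
  then show ?thesis by (simp add: N_def trace_def sum_distrib_left)
qed

lemma gradH_row_sum_sq_le:
  fixes p :: "'m::finite \<Rightarrow> real^'k"
  assumes "\<And>j. p j \<noteq> q"
    and "\<And>j. (g j has_real_derivative g' j (norm (p j - q))) (at (norm (p j - q)))"
  shows "(\<Sum>j\<in>UNIV. (gradH g p q $ i $ j)\<^sup>2)
           \<le> real CARD('m) * (MAX j\<in>UNIV. \<bar>g' j (norm (p j - q))\<bar>\<^sup>2)"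
    (is "_ \<le> _ * ?M")
proof -
  have "(gradH g p q $ i $ j)\<^sup>2 \<le> ?M" for j
  proof -
    have "(gradH g p q $ i $ j)\<^sup>2 \<le> \<bar>g' j (norm (p j - q))\<bar>\<^sup>2"
      using abs_gradH_le[of p j q g, OF assms] by (metis abs_ge_zero power2_abs power_mono)
    also have "\<dots> \<le> ?M" by (rule Max_ge) auto
    finally show ?thesis .
  qed
  then have "(\<Sum>j\<in>UNIV. (gradH g p q $ i $ j)\<^sup>2) \<le> (\<Sum>j\<in>(UNIV::'m set). ?M)"
    by (rule sum_mono)
  then show ?thesis by simp
qed

theorem proposition1:
  fixes q :: "real^'k"
    and p :: "'m::finite \<Rightarrow> real^'k"
    and g g' :: "'m \<Rightarrow> real \<Rightarrow> real"
  assumes p_ne: "\<And>i. p i \<noteq> q"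
    and g_deriv: "\<And>i r. r > 0 \<Longrightarrow> (g i has_real_derivative g' i r) (at r)"
    and g'_cont: "\<And>i. continuous_on {0<..} (g' i)"
    and mono: "\<And>i. antimono_on {0<..} (\<lambda>r. \<bar>g' i r\<bar>)"
    and posdef: "pos_def (\<Sum>i\<in>UNIV. outer ((p i - q) /\<^sub>R norm (p i - q)) ((p i - q) /\<^sub>R norm (p i - q)))"
    and inv: "invertible (gradH g p q ** transpose (gradH g p q))"
  shows "1 / (real CARD('m) * Lcost g p q) \<le> (MAX i\<in>UNIV. \<bar>g' i (norm (p i - q))\<bar> ^ 2)"
proof -
  define Mx where "Mx = (MAX i\<in>UNIV. \<bar>g' i (norm (p i - q))\<bar> ^ 2)"
  have "real CARD('k) \<le> real CARD('m) * Mx * Lcost g p q"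
    unfolding Lcost_def Mx_def
    using p_ne g_deriv by (intro card_le_trace_gram_inv inv gradH_row_sum_sq_le) auto
  moreover have "1 \<le> real CARD('k)" by simp
  ultimately have key: "1 \<le> real CARD('m) * Mx * Lcost g p q" by linarith
  have "0 \<le> real CARD('m) * Mx" unfolding Mx_def by (simp add: Max_ge_iff)
  with key have "0 < real CARD('m) * Lcost g p q"
    by (smt (verit) mult_nonneg_nonpos mult_pos_pos of_nat_0_less_iff zero_less_card_finite)
  with key show ?thesis
    unfolding Mx_def[symmetric] by (simp add: divide_le_eq algebra_simps)
qed

end
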